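(* For all integers $p,l\geq 0$ and $t>0$, $$D^{l}\left\{\frac{(1-t)^{p+1}}{t}\right\}=(-1)^{l}\sum_{s=0}^{l}\frac{(l+s)!\,(p+1)!}{2^{s}s!\,(l-s)!\,(p-l+s+1)!}\frac{(1-t)^{p-l+s+1}}{t^{l+s+1}}=(-1)^{l}l!\sum_{s=0}^{l}\frac{1}{2^{s}}\binom{p+1}{l-s}\binom{l+s}{s}\frac{(1-t)^{p-l+s+1}}{t^{l+s+1}}.$$
   Context: $D$ denotes the operator $(D\varphi)(t)=\frac{1}{t}\varphi'(t)$ acting on functions of $t$, and $D^l$ its $l$-fold iterate. Conventions: $\binom{a}{b}=0$ if $b>a$ or $b<0$, and $1/N!=0$ for negative integers $N$. *)

theory Defs
  imports "HOL-Analysis.Analysis"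
begin

definition Dop :: "(real \<Rightarrow> real) \<Rightarrow> (real \<Rightarrow> real)" where
  "Dop \<phi> = (\<lambda>t. deriv \<phi> t / t)"

definition inv_fact :: "int \<Rightarrow> real" where
  "inv_fact N = (if N < 0 then 0 else 1 / fact (nat N))"

end

theory Submission
  imports Defs
begin

text \<open>
  Applying \<open>D\<close> to \<open>(1 - t)^m / t^n\<close> gives
  \<open>-m (1 - t)^(m-1) / t^(n+1) - n (1 - t)^m / t^(n+2)\<close>. Hence by induction
  \<open>D^l {(1 - t)^(p+1) / t} = (-1)^l \<Sum>s. c(l,s) (1 - t)^(p+1+s-l) / t^(l+s+1)\<close> with
  \<open>c(l+1,s) = (p+1+s-l) c(l,s) + (l+s) c(l,s-1)\<close>. Substituting
  \<open>c(l,s) = (p+1)! a(l,s) / (p+1+s-l)!\<close> turns this into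
  \<open>a(l+1,s) = a(l,s) + (l+s) a(l,s-1)\<close>, the recurrence satisfied by the coefficients
  \<open>a(l,s) = (l+s)! / (2^s s! (l-s)!)\<close> of the Bessel polynomials.
\<close>

lemma has_real_derivative_one_minus_power_div_power:
  fixes x :: real
  assumes "x > 0"
  shows "((\<lambda>x. (1 - x) ^ m / x ^ n) has_real_derivative
           - real m * (1 - x) ^ (m - 1) / x ^ n - real n * (1 - x) ^ m / x ^ Suc n) (at x)"
proof -
  have "((\<lambda>x. (1 - x) ^ m / x ^ n) has_real_derivative
          (real m * (1 - x) ^ (m - 1) * (- 1) * x ^ n - (1 - x) ^ m * (real n * x ^ (n - 1)))
          / (x ^ n * x ^ n)) (at x)"
    using assms by (auto intro!: derivative_eq_intros)
  moreover have "(real m * (1 - x) ^ (m - 1) * (- 1) * x ^ n - (1 - x) ^ m * (real n * x ^ (n - 1)))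
          / (x ^ n * x ^ n) = - real m * (1 - x) ^ (m - 1) / x ^ n - real n * (1 - x) ^ m / x ^ Suc n"
    using assms by (cases n) (simp_all add: field_simps)
  ultimately show ?thesis
    by simp
qed

text \<open>
  The exponent \<open>p + 1 + s - l\<close> is truncated subtraction. This is harmless: once it
  reaches \<open>0\<close> the recurrence multiplies the coefficient by \<open>0\<close>, so every term
  whose true exponent is negative has coefficient \<open>0\<close>.
\<close>
fun Dop_coeff :: "nat \<Rightarrow> nat \<Rightarrow> nat \<Rightarrow> real" where
  "Dop_coeff p 0 s = (if s = 0 then 1 else 0)"
| "Dop_coeff p (Suc l) s = Dop_coeff p l s * real (p + 1 + s - l)
     + (if s = 0 then 0 else Dop_coeff p l (s - 1) * real (l + s))"

definition Dop_expansion :: "nat \<Rightarrow> nat \<Rightarrow> real \<Rightarrow> real" where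
  "Dop_expansion p l x =
     (-1) ^ l * (\<Sum>s = 0..l. Dop_coeff p l s * ((1 - x) ^ (p + 1 + s - l) / x ^ (l + s + 1)))"

lemma Dop_coeff_eq_0: "l < s \<Longrightarrow> Dop_coeff p l s = 0"
  by (induction l arbitrary: s) auto

lemma times_Dop_expansion_Suc:
  fixes x :: real
  assumes pos: "x > 0"
  shows "x * Dop_expansion p (Suc l) x = (-1) ^ Suc l * (\<Sum>s = 0..l. Dop_coeff p l s *
           (real (p + 1 + s - l) * (1 - x) ^ (p + s - l) / x ^ (l + s + 1)
            + real (l + s + 1) * (1 - x) ^ (p + 1 + s - l) / x ^ (l + s + 2)))"
proof -
  let ?T = "\<lambda>s. x * ((1 - x) ^ (p + 1 + s - Suc l) / x ^ (Suc l + s + 1))"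
  have "x * Dop_expansion p (Suc l) x
        = (-1) ^ Suc l * ((\<Sum>s = 0..Suc l. Dop_coeff p l s * real (p + 1 + s - l) * ?T s)
            + (\<Sum>s = 0..Suc l. (if s = 0 then 0 else Dop_coeff p l (s - 1) * real (l + s)) * ?T s))"
    unfolding Dop_expansion_def
    by (simp only: sum_distrib_left sum.distrib[symmetric] Dop_coeff.simps)
      (rule sum.cong; simp add: algebra_simps)
  also have "(\<Sum>s = 0..Suc l. Dop_coeff p l s * real (p + 1 + s - l) * ?T s)
        = (\<Sum>s = 0..l. Dop_coeff p l s * (real (p + 1 + s - l) * (1 - x) ^ (p + s - l) / x ^ (l + s + 1)))"
    using pos by (simp add: Dop_coeff_eq_0 field_simps)
  also have "(\<Sum>s = 0..Suc l. (if s = 0 then 0 else Dop_coeff p l (s - 1) * real (l + s)) * ?T s)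
        = (\<Sum>s = 0..l. Dop_coeff p l s * (real (l + s + 1) * (1 - x) ^ (p + 1 + s - l) / x ^ (l + s + 2)))"
    using pos by (subst sum.atLeast0_atMost_Suc_shift)
      (simp add: Suc_diff_le field_simps del: sum.atLeast0_atMost_Suc)
  finally show ?thesis
    by (simp only: sum.distrib[symmetric] distrib_left)
qed

lemma Dop_expansion_has_derivative:
  fixes x :: real
  assumes "x > 0"
  shows "(Dop_expansion p l has_real_derivative x * Dop_expansion p (Suc l) x) (at x)"
proof -
  have derivative: "(Dop_expansion p l has_real_derivative (-1) ^ l * (\<Sum>s = 0..l. Dop_coeff p l s *
          (- real (p + 1 + s - l) * (1 - x) ^ (p + 1 + s - l - 1) / x ^ (l + s + 1)
           - real (l + s + 1) * (1 - x) ^ (p + 1 + s - l) / x ^ Suc (l + s + 1)))) (at x)"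
    (is "(_ has_real_derivative (-1) ^ l * ?S) _")
    unfolding Dop_expansion_def [abs_def] using assms
    by (intro DERIV_cmult DERIV_sum has_real_derivative_one_minus_power_div_power)
  have "?S = - (\<Sum>s = 0..l. Dop_coeff p l s *
          (real (p + 1 + s - l) * (1 - x) ^ (p + s - l) / x ^ (l + s + 1)
           + real (l + s + 1) * (1 - x) ^ (p + 1 + s - l) / x ^ (l + s + 2)))"
    unfolding sum_negf [symmetric] by (intro sum.cong refl) (simp add: algebra_simps)
  with derivative show ?thesis
    by (simp add: times_Dop_expansion_Suc [OF assms])
qed

lemma Dop_iterate_eq_Dop_expansion:
  fixes x :: real
  assumes "x > 0"
  shows "(Dop ^^ l) (\<lambda>x. (1 - x) ^ (p + 1) / x) x = Dop_expansion p l x"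
  using assms
proof (induction l arbitrary: x)
  case 0
  then show ?case
    by (simp add: Dop_expansion_def)
next
  case (Suc l)
  have "((Dop ^^ l) (\<lambda>x. (1 - x) ^ (p + 1) / x) has_real_derivative x * Dop_expansion p (Suc l) x) (at x)"
    by (rule has_field_derivative_transform_within_open
          [OF Dop_expansion_has_derivative [OF Suc.prems], of "{0<..}"])
      (use Suc in auto)
  then have "deriv ((Dop ^^ l) (\<lambda>x. (1 - x) ^ (p + 1) / x)) x = x * Dop_expansion p (Suc l) x"
    by (rule DERIV_imp_deriv)
  then show ?case
    unfolding funpow.simps(2) comp_apply Dop_def [of "(Dop ^^ l) _"] using Suc.prems by simp
qed

definition bessel_coeff :: "nat \<Rightarrow> nat \<Rightarrow> real" where
  "bessel_coeff l s = fact (l + s) / (2 ^ s * fact s * fact (l - s))"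

lemma bessel_coeff_0 [simp]: "bessel_coeff l 0 = 1"
  by (simp add: bessel_coeff_def)

lemma bessel_coeff_Suc:
  assumes "0 < s" "s \<le> l"
  shows "bessel_coeff (Suc l) s = bessel_coeff l s + real (l + s) * bessel_coeff l (s - 1)"
proof -
  obtain a r where "s = Suc a" and "l = Suc a + r"
    using assms by (metis gr0_implies_Suc le_iff_add)
  then show ?thesis
    unfolding bessel_coeff_def
    by (simp add: fact_Suc field_simps del: of_nat_Suc) (simp add: algebra_simps)
qed

lemma bessel_coeff_Suc_diag: "bessel_coeff (Suc l) (Suc l) = real (2 * l + 1) * bessel_coeff l l"
  unfolding bessel_coeff_def
  by (simp add: fact_Suc field_simps del: of_nat_Suc) (simp add: algebra_simps)

lemma bessel_coeff_eq_binomial: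
  "bessel_coeff l s * fact (l - s) = fact l * real ((l + s) choose s) / 2 ^ s"
  using binomial_fact [of s "l + s", where 'a = real] by (simp add: bessel_coeff_def field_simps)

lemma inv_fact_mult_nat: "inv_fact k * real (nat k) = inv_fact (k - 1)"
proof (cases "k \<ge> 1")
  case True
  define m where "m = nat (k - 1)"
  have "nat k = Suc m" "k - 1 = int m"
    using True by (simp_all add: m_def)
  with True show ?thesis
    by (simp add: inv_fact_def)
next
  case False
  then show ?thesis
    by (simp add: inv_fact_def)
qed

lemma inv_fact_mult_power_nat: "inv_fact k * x ^ nat k = inv_fact k * x powi k"
  by (cases "k < 0") (simp_all add: inv_fact_def power_int_def)

lemma fact_mult_inv_fact_diff: "fact n * inv_fact (int n - int m) = fact m * real (n choose m)"
proof (cases "m \<le> n")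
  case True
  have "nat (int n - int m) = n - m" "\<not> int n - int m < 0"
    using True by simp_all
  then have "inv_fact (int n - int m) = 1 / fact (n - m)"
    unfolding inv_fact_def by presburger
  moreover have "real (n choose m) = fact n / (fact m * fact (n - m))"
    using True by (rule binomial_fact)
  ultimately show ?thesis
    by simp
next
  case False
  then show ?thesis
    by (simp add: inv_fact_def)
qed

lemma Dop_coeff_closed_form:
  "Dop_coeff p l s =
     (if s \<le> l then fact (p + 1) * bessel_coeff l s * inv_fact (int p - int l + int s + 1) else 0)"
proof (induction l arbitrary: s)
  case 0
  show ?case
    by (simp add: inv_fact_def nat_add_distrib)
next
  case (Suc l)
  define k where "k = int p - int l + int s + 1"
  have nat_k: "real (p + 1 + s - l) = real (nat k)"
    by (simp add: k_def)
  have index_Suc: "int p - int (Suc l) + int s + 1 = k - 1"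
    by (simp add: k_def)
  consider "Suc l < s" | "s = Suc l" | "s = 0" | "0 < s" "s \<le> l"
    by linarith
  then show ?case
  proof cases
    case 1
    then show ?thesis
      by (simp add: Dop_coeff_eq_0)
  next
    case 2
    then show ?thesis
      using Suc.IH [of l] by (simp add: Dop_coeff_eq_0 bessel_coeff_Suc_diag algebra_simps)
  next
    case 3
    have "Dop_coeff p (Suc l) s = Dop_coeff p l s * real (nat k)"
      unfolding Dop_coeff.simps(2) nat_k using 3 by simp
    also have "\<dots> = fact (p + 1) * bessel_coeff (Suc l) s * (inv_fact k * real (nat k))"
      using 3 Suc.IH [of s] by (simp add: k_def)
    also have "\<dots> = fact (p + 1) * bessel_coeff (Suc l) s * inv_fact (int p - int (Suc l) + int s + 1)"
      by (simp only: inv_fact_mult_nat index_Suc)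
    finally show ?thesis
      using 3 by simp
  next
    case 4
    have index_pred: "int p - int l + int (s - 1) + 1 = k - 1"
      using 4 by (simp add: k_def)
    have "Dop_coeff p (Suc l) s = Dop_coeff p l s * real (nat k) + Dop_coeff p l (s - 1) * real (l + s)"
      unfolding Dop_coeff.simps(2) nat_k using 4 by simp
    also have "\<dots> = fact (p + 1) * (bessel_coeff l s * (inv_fact k * real (nat k))
                        + real (l + s) * bessel_coeff l (s - 1) * inv_fact (k - 1))"
      using 4 Suc.IH [of s, folded k_def] Suc.IH [of "s - 1", unfolded index_pred]
      by (simp add: algebra_simps)
    also have "\<dots> = fact (p + 1) * bessel_coeff (Suc l) s * inv_fact (k - 1)"
      using 4 by (simp add: inv_fact_mult_nat bessel_coeff_Suc algebra_simps)
    finally show ?thesis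
      using 4 unfolding index_Suc by simp
  qed
qed

lemma Dop_expansion_eq_factorial_sum:
  "Dop_expansion p l t
     = (-1) ^ l * (\<Sum>s = 0..l. fact (l + s) * fact (p + 1) / (2 ^ s * fact s * fact (l - s))
         * inv_fact (int p - int l + int s + 1)
         * ((1 - t) powi (int p - int l + int s + 1) / t ^ (l + s + 1)))"
proof -
  have summand: "Dop_coeff p l s * ((1 - t) ^ (p + 1 + s - l) / t ^ (l + s + 1))
     = fact (l + s) * fact (p + 1) / (2 ^ s * fact s * fact (l - s)) * inv_fact (int p - int l + int s + 1)
       * ((1 - t) powi (int p - int l + int s + 1) / t ^ (l + s + 1))" if "s \<le> l" for s
  proof -
    define k where "k = int p - int l + int s + 1"
    have "p + 1 + s - l = nat k"
      by (simp add: k_def)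
    then have "Dop_coeff p l s * ((1 - t) ^ (p + 1 + s - l) / t ^ (l + s + 1))
          = fact (p + 1) * bessel_coeff l s * (inv_fact k * (1 - t) ^ nat k) / t ^ (l + s + 1)"
      using that by (simp add: Dop_coeff_closed_form k_def)
    also have "\<dots> = fact (p + 1) * bessel_coeff l s * (inv_fact k * (1 - t) powi k) / t ^ (l + s + 1)"
      by (simp only: inv_fact_mult_power_nat)
    finally show ?thesis
      by (simp add: bessel_coeff_def k_def field_simps)
  qed
  show ?thesis
    unfolding Dop_expansion_def
    by (intro arg_cong [where f = "\<lambda>u. (-1) ^ l * u"] sum.cong refl summand) simp
qed

lemma factorial_coeff_eq_binomial_coeff:
  assumes "s \<le> l"
  shows "fact (l + s) * fact (p + 1) / (2 ^ s * fact s * fact (l - s)) * inv_fact (int p - int l + int s + 1)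
     = fact l * (1 / 2 ^ s * real ((p + 1) choose (l - s)) * real ((l + s) choose s))"
proof -
  have index: "int p - int l + int s + 1 = int (p + 1) - int (l - s)"
    using assms by simp
  have "fact (l + s) * fact (p + 1) / (2 ^ s * fact s * fact (l - s)) * inv_fact (int p - int l + int s + 1)
      = bessel_coeff l s * (fact (p + 1) * inv_fact (int (p + 1) - int (l - s)))"
    unfolding index by (simp add: bessel_coeff_def)
  also have "\<dots> = bessel_coeff l s * fact (l - s) * real ((p + 1) choose (l - s))"
    by (simp only: fact_mult_inv_fact_diff mult.assoc)
  finally show ?thesis
    by (simp add: bessel_coeff_eq_binomial)
qed

lemma factorial_sum_eq_binomial_sum:
  "(-1) ^ l * (\<Sum>s = 0..l. fact (l + s) * fact (p + 1) / (2 ^ s * fact s * fact (l - s))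
       * inv_fact (int p - int l + int s + 1)
       * ((1 - t) powi (int p - int l + int s + 1) / t ^ (l + s + 1)))
   = (-1) ^ l * fact l * (\<Sum>s = 0..l. 1 / 2 ^ s * real ((p + 1) choose (l - s))
       * real ((l + s) choose s)
       * ((1 - t) powi (int p - int l + int s + 1) / t ^ (l + s + 1)))"
proof -
  have "(\<Sum>s = 0..l. fact (l + s) * fact (p + 1) / (2 ^ s * fact s * fact (l - s))
          * inv_fact (int p - int l + int s + 1)
          * ((1 - t) powi (int p - int l + int s + 1) / t ^ (l + s + 1)))
      = (\<Sum>s = 0..l. fact l * (1 / 2 ^ s * real ((p + 1) choose (l - s)) * real ((l + s) choose s))
          * ((1 - t) powi (int p - int l + int s + 1) / t ^ (l + s + 1)))"
    by (intro sum.cong refl) (simp only: factorial_coeff_eq_binomial_coeff atLeastAtMost_iff)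
  then show ?thesis
    by (simp only: sum_distrib_left mult.assoc)
qed

theorem lemma3p2:
  fixes p l :: nat and t :: real
  assumes "t > 0"
  shows "(Dop ^^ l) (\<lambda>x. (1 - x) ^ (p + 1) / x) t
           = (-1) ^ l * (\<Sum>s = 0..l. fact (l + s) * fact (p + 1) / (2 ^ s * fact s * fact (l - s))
                 * inv_fact (int p - int l + int s + 1)
                 * ((1 - t) powi (int p - int l + int s + 1) / t ^ (l + s + 1)))
       \<and> (-1) ^ l * (\<Sum>s = 0..l. fact (l + s) * fact (p + 1) / (2 ^ s * fact s * fact (l - s))
                 * inv_fact (int p - int l + int s + 1)
                 * ((1 - t) powi (int p - int l + int s + 1) / t ^ (l + s + 1)))
           = (-1) ^ l * fact l * (\<Sum>s = 0..l. 1 / 2 ^ s * real ((p + 1) choose (l - s))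
                 * real ((l + s) choose s)
                 * ((1 - t) powi (int p - int l + int s + 1) / t ^ (l + s + 1)))"
  unfolding Dop_iterate_eq_Dop_expansion [OF assms] Dop_expansion_eq_factorial_sum
  by (intro conjI refl factorial_sum_eq_binomial_sum)

end
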